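(* Let $\mathcal{H}$ be a finite set of hypotheses with a prior probability distribution $P$, $\mathcal{T}$ a finite set of tests, $\mathcal{O}$ a finite set of outcomes, each $h\in\mathcal{H}$ a function $h:\mathcal{T}\to\mathcal{O}$, and $\mathcal{R}$ a finite collection of decision regions $r\subseteq\mathcal{H}$ with $\bigcup_{r\in\mathcal{R}} r=\mathcal{H}$. Let $\mathcal{G}$, $k$, $\mathcal{E}$ and $f_{\mathrm{HEC}}$ be as defined in the context. Then $f_{\mathrm{HEC}}$ is strongly adaptive monotone and adaptive submodular, i.e.: (i) for every $\mathcal{S}\subseteq\mathcal{T}\times\mathcal{O}$, every $t\in\mathcal{T}$ and every $h\in\mathcal{H}$, $f_{\mathrm{HEC}}(\mathcal{S}\cup\{(t,h(t))\})-f_{\mathrm{HEC}}(\mathcal{S})\ge 0$; (ii) for all $\mathcal{S}\subseteq\mathcal{S}'\subseteq\mathcal{T}\times\mathcal{O}$ with $P(\mathcal{V}(\mathcal{S}'))>0$ and every test $t\in\mathcal{T}$, $\Delta(t\mid\mathcal{S})\ge\Delta(t\mid\mathcal{S}')$.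
   Context: Subregions: hypotheses are grouped into the same subregion iff they belong to exactly the same decision regions; $\mathcal{G}$ is the set of these classes, and $g\subseteq r$ means every hypothesis of $g$ lies in $r$. Set $k=\min\big(\max_{h\in\mathcal{H}}|\{r: h\in r\}|,\ \max_{r\in\mathcal{R}}|\{g\in\mathcal{G}: g\subseteq r\}|\big)+1$. $\mathcal{E}$ is the set of all multisets $e$ of exactly $k$ subregions (repetitions allowed) such that no $r\in\mathcal{R}$ satisfies $g\subseteq r$ for all $g\in e$. For $\mathcal{S}\subseteq\mathcal{T}\times\mathcal{O}$ let $\mathcal{V}(\mathcal{S})=\{h: h(t)=o\ \forall (t,o)\in\mathcal{S}\}$. Define $f_{\mathrm{HEC}}(\mathcal{S})=\sum_{e\in\mathcal{E}}\prod_{g\in e}P(g)-\sum_{e\in\mathcal{E}}\prod_{g\in e}P(g\cap\mathcal{V}(\mathcal{S}))$, where $P(A)=\sum_{h\in A}P(h)$ and products over a multiset count multiplicities. The expected marginal gain of test $t$ given $\mathcal{S}$ with $P(\mathcal{V}(\mathcal{S}))>0$ is $\Delta(t\mid\mathcal{S})=\sum_{h\in\mathcal{V}(\mathcal{S})}\frac{P(h)}{P(\mathcal{V}(\mathcal{S}))}\big(f_{\mathrm{HEC}}(\mathcal{S}\cup\{(t,h(t))\})-f_{\mathrm{HEC}}(\mathcal{S})\big)$. *)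

theory Defs
  imports Complex_Main "HOL-Library.Multiset"
begin

definition prob_of :: "('a \<Rightarrow> real) \<Rightarrow> 'a set \<Rightarrow> real" where
  "prob_of P A = (\<Sum>h\<in>A. P h)"

definition subregions :: "'a set \<Rightarrow> 'a set set \<Rightarrow> 'a set set" where
  "subregions H R = (\<lambda>h. {h'\<in>H. \<forall>r\<in>R. (h \<in> r) = (h' \<in> r)}) ` H"

definition hec_k :: "'a set \<Rightarrow> 'a set set \<Rightarrow> nat" where
  "hec_k H R = min (Max ((\<lambda>h. card {r\<in>R. h \<in> r}) ` H))
                   (Max ((\<lambda>r. card {g\<in>subregions H R. g \<subseteq> r}) ` R)) + 1"

definition hec_edges :: "'a set \<Rightarrow> 'a set set \<Rightarrow> 'a set multiset set" where
  "hec_edges H R = {e. size e = hec_k H R \<and> set_mset e \<subseteq> subregions H R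
                      \<and> \<not> (\<exists>r\<in>R. \<forall>g\<in>#e. g \<subseteq> r)}"

definition version_space :: "('t \<Rightarrow> 'o) set \<Rightarrow> ('t \<times> 'o) set \<Rightarrow> ('t \<Rightarrow> 'o) set" where
  "version_space H S = {h\<in>H. \<forall>(t, v)\<in>S. h t = v}"

definition f_hec :: "('t \<Rightarrow> 'o) set \<Rightarrow> ('t \<Rightarrow> 'o) set set \<Rightarrow> (('t \<Rightarrow> 'o) \<Rightarrow> real)
                     \<Rightarrow> ('t \<times> 'o) set \<Rightarrow> real" where
  "f_hec H R P S =
     (\<Sum>e\<in>hec_edges H R. \<Prod>g\<in>#e. prob_of P g)
   - (\<Sum>e\<in>hec_edges H R. \<Prod>g\<in>#e. prob_of P (g \<inter> version_space H S))"

definition hec_gain :: "('t \<Rightarrow> 'o) set \<Rightarrow> ('t \<Rightarrow> 'o) set set \<Rightarrow> (('t \<Rightarrow> 'o) \<Rightarrow> real)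
                     \<Rightarrow> 't \<Rightarrow> ('t \<times> 'o) set \<Rightarrow> real" where
  "hec_gain H R P t S =
     (\<Sum>h\<in>version_space H S. P h / prob_of P (version_space H S)
        * (f_hec H R P (insert (t, h t) S) - f_hec H R P S))"

end

theory Submission imports Defs begin

text \<open>
Write \<open>F(U) = \<Sum>\<^sub>e \<Prod>\<^sub>g\<^sub>\<in>\<^sub>e P(g \<inter> U)\<close>, so that \<open>f_HEC(S) = F(H) - F(V(S))\<close>. Being a
polynomial with nonnegative coefficients in the masses \<open>P(g \<inter> U)\<close>, \<open>F\<close> is monotone and
supermodular in \<open>U\<close>; monotonicity gives (i). The expected gain only depends on the version
space \<open>V\<close>, so for (ii) it suffices that it does not decrease when a hypothesis \<open>h\<close> is added
to \<open>V\<close>. The choice of \<open>k\<close> gives an exchange property: any subregion \<open>g\<close> can replace some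
member of any edge so that the result is again an edge. This injects the edges into pairs
(edge through \<open>g\<close>, subregion), whence \<open>F(U) \<le> P(U) \<cdot> \<partial>\<^sub>gF(U)\<close>; with supermodularity this
yields \<open>P(h) F(W + h) \<le> P(V + h) (F(V + h) - F(V))\<close> for \<open>W \<subseteq> V\<close>, the estimate on which
the one-step comparison rests.
\<close>

lemma prod_mset_nonneg:
  fixes f :: "'a \<Rightarrow> 'b::linordered_semidom"
  shows "(\<And>g. g \<in># e \<Longrightarrow> 0 \<le> f g) \<Longrightarrow> 0 \<le> (\<Prod>g\<in>#e. f g)"
  by (induction e) auto

lemma prod_mset_mono:
  fixes f f' :: "'a \<Rightarrow> 'b::linordered_semidom"
  shows "(\<And>g. g \<in># e \<Longrightarrow> 0 \<le> f g \<and> f g \<le> f' g) \<Longrightarrow> (\<Prod>g\<in>#e. f g) \<le> (\<Prod>g\<in>#e. f' g)"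
proof (induction e)
  case (add x e)
  then have "0 \<le> (\<Prod>g\<in>#e. f g)" by (simp add: prod_mset_nonneg)
  with add show ?case by (simp add: mult_mono')
qed simp

lemma prod_mset_increment_mono:
  fixes a b d :: "'a \<Rightarrow> 'b::linordered_idom"
  assumes "\<And>g. g \<in># e \<Longrightarrow> 0 \<le> a g \<and> a g \<le> b g \<and> 0 \<le> d g"
  shows "(\<Prod>g\<in>#e. a g + d g) - (\<Prod>g\<in>#e. a g) \<le> (\<Prod>g\<in>#e. b g + d g) - (\<Prod>g\<in>#e. b g)"
  using assms
proof (induction e)
  case (add x e)
  let ?A = "\<Prod>g\<in>#e. a g + d g" and ?a = "\<Prod>g\<in>#e. a g"
  let ?B = "\<Prod>g\<in>#e. b g + d g" and ?b = "\<Prod>g\<in>#e. b g"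
  have x: "0 \<le> a x" "a x \<le> b x" "0 \<le> d x" using add.prems by auto
  have "0 \<le> ?A - ?a" using add.prems by (simp add: prod_mset_mono)
  moreover have "?A - ?a \<le> ?B - ?b" using add by simp
  ultimately have "a x * (?A - ?a) \<le> b x * (?B - ?b)" using x by (meson mult_mono order_trans)
  moreover have "d x * ?A \<le> d x * ?B" using add.prems x by (simp add: mult_left_mono prod_mset_mono)
  ultimately show ?case by (simp add: algebra_simps)
qed simp

lemma prod_mset_increment_ge:
  fixes a d :: "'a \<Rightarrow> 'b::linordered_idom"
  assumes "g0 \<in># e" and "\<And>g. g \<in># e \<Longrightarrow> 0 \<le> a g \<and> 0 \<le> d g"
  shows "d g0 * (\<Prod>g\<in>#e - {#g0#}. a g) \<le> (\<Prod>g\<in>#e. a g + d g) - (\<Prod>g\<in>#e. a g)"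
proof -
  obtain e' where e: "e = add_mset g0 e'" using assms(1) by (metis mset_add)
  have "(\<Prod>g\<in>#e'. a g) \<le> (\<Prod>g\<in>#e'. a g + d g)" using assms(2) e by (simp add: prod_mset_mono)
  moreover have "0 \<le> a g0 + d g0" using assms e by auto
  ultimately have "(a g0 + d g0) * (\<Prod>g\<in>#e'. a g) \<le> (a g0 + d g0) * (\<Prod>g\<in>#e'. a g + d g)"
    by (rule mult_left_mono)
  then show ?thesis using e by (simp add: algebra_simps)
qed

lemma prob_of_nonneg: "(\<And>h. h \<in> U \<Longrightarrow> 0 \<le> P h) \<Longrightarrow> 0 \<le> prob_of P U"
  unfolding prob_of_def by (rule sum_nonneg)

lemma prob_of_mono:
  "finite V \<Longrightarrow> U \<subseteq> V \<Longrightarrow> (\<And>h. h \<in> V \<Longrightarrow> 0 \<le> P h) \<Longrightarrow> prob_of P U \<le> prob_of P V"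
  unfolding prob_of_def by (rule sum_mono2) auto

lemma prob_of_insert: "finite U \<Longrightarrow> h \<notin> U \<Longrightarrow> prob_of P (insert h U) = P h + prob_of P U"
  unfolding prob_of_def by simp

lemma prob_of_Int_insert:
  "finite g \<Longrightarrow> h \<notin> U \<Longrightarrow>
    prob_of P (g \<inter> insert h U) = prob_of P (g \<inter> U) + (if h \<in> g then P h else 0)"
  by (cases "h \<in> g") (auto simp: Int_insert_right prob_of_insert)

lemma expected_gain_step_inequality:
  fixes Q Q1 M A B c d p1 :: real
  assumes "Q = Q1 + c * M + d * B" and "B \<le> A" and "(c + d) * M \<le> Q"
    and "c * M \<le> (c + p1) * A" and "0 \<le> c" and "0 \<le> d" and "d \<le> p1" and "0 < p1"
  shows "Q / (c + p1) - Q1 / p1 \<le> A"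
proof -
  define p where "p = c + p1"
  have "0 < p" using assms unfolding p_def by simp
  have "Q * p1 - Q1 * p = p * (c * M + d * B) - c * Q"
    unfolding assms(1) p_def by (simp add: algebra_simps)
  also have "\<dots> \<le> p * (c * M + d * A) - c * ((c + d) * M)"
    using assms \<open>0 < p\<close> by (intro diff_mono mult_left_mono add_left_mono) auto
  also have "\<dots> = (p - (c + d)) * (c * M) + p * d * A" by (simp add: algebra_simps)
  also have "\<dots> \<le> (p - (c + d)) * (p * A) + p * d * A"
    using assms unfolding p_def by (simp add: mult_left_mono)
  also have "\<dots> = A * (p * p1)" unfolding p_def by (simp add: algebra_simps)
  finally have numerator: "Q * p1 - Q1 * p \<le> A * (p * p1)" .
  have "Q / p - Q1 / p1 = (Q * p1 - Q1 * p) / (p * p1)"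
    using \<open>0 < p\<close> assms by (simp add: field_simps)
  also have "\<dots> \<le> A" using numerator \<open>0 < p\<close> assms by (simp add: pos_divide_le_eq)
  finally show ?thesis unfolding p_def .
qed

locale hec =
  fixes H :: "'a set" and R :: "'a set set" and P :: "'a \<Rightarrow> real"
  assumes finite_H: "finite H" and finite_R: "finite R"
    and prior_nonneg: "\<And>h. h \<in> H \<Longrightarrow> 0 \<le> P h"
begin

abbreviation G where "G \<equiv> subregions H R"
abbreviation E where "E \<equiv> hec_edges H R"
abbreviation k where "k \<equiv> hec_k H R"

definition subregion :: "'a \<Rightarrow> 'a set" where
  "subregion h = {h'\<in>H. \<forall>r\<in>R. (h \<in> r) = (h' \<in> r)}"

lemma subregions_eq: "G = subregion ` H"
  by (simp add: subregions_def subregion_def[abs_def])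

lemma finite_subregions: "finite G"
  using finite_H subregions_eq by simp

lemma subregion_subset: "g \<in> G \<Longrightarrow> g \<subseteq> H"
  by (auto simp: subregions_eq subregion_def)

lemma in_own_subregion: "h \<in> H \<Longrightarrow> h \<in> subregion h"
  by (simp add: subregion_def)

lemma subregions_disjoint: "g1 \<in> G \<Longrightarrow> g2 \<in> G \<Longrightarrow> x \<in> g1 \<Longrightarrow> x \<in> g2 \<Longrightarrow> g1 = g2"
  by (auto simp: subregions_eq subregion_def)

lemma hec_edge_subregion: "e \<in> E \<Longrightarrow> g \<in># e \<Longrightarrow> g \<in> G"
  by (auto simp: hec_edges_def)

lemma finite_hec_edges: "finite E"
proof -
  have "E \<subseteq> multisets_of_size G k" by (auto simp: hec_edges_def multisets_of_size_def)
  then show ?thesis using finite_subregions finite_multisets_of_size finite_subset by blast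
qed

lemma hec_k_bound: "(\<forall>h\<in>H. card {r\<in>R. h \<in> r} < k) \<or> (\<forall>r\<in>R. card {g\<in>G. g \<subseteq> r} < k)"
proof -
  define a where "a = Max ((\<lambda>h. card {r\<in>R. h \<in> r}) ` H)"
  define b where "b = Max ((\<lambda>r. card {g\<in>G. g \<subseteq> r}) ` R)"
  have "\<forall>h\<in>H. card {r\<in>R. h \<in> r} \<le> a" unfolding a_def using finite_H by simp
  moreover have "\<forall>r\<in>R. card {g\<in>G. g \<subseteq> r} \<le> b" unfolding b_def using finite_R by simp
  moreover have "k = min a b + 1" unfolding a_def b_def hec_k_def by simp
  ultimately show ?thesis by (cases "a \<le> b") auto
qed

text \<open>If every member \<open>h\<close> of an edge is dropped in turn and the rest is covered by a
region \<open>\<rho> h\<close>, then \<open>h \<not>\<subseteq> \<rho> h\<close>, since the edge itself is covered by no region.\<close>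

lemma hec_edge_cover_injective:
  assumes e: "e \<in> E"
    and cover: "\<And>h. h \<in># e \<Longrightarrow> \<rho> h \<in> R \<and> (\<forall>g\<in>#e - {#h#}. g \<subseteq> \<rho> h)"
  shows "card (set_mset e) = k" and "inj_on \<rho> (set_mset e)"
proof -
  have uncovered: "\<not> (\<forall>g\<in>#e. g \<subseteq> r)" if "r \<in> R" for r
    using e that by (auto simp: hec_edges_def)
  have missed: "\<not> h \<subseteq> \<rho> h" if h: "h \<in># e" for h
  proof
    assume "h \<subseteq> \<rho> h"
    then have "\<forall>g\<in>#add_mset h (e - {#h#}). g \<subseteq> \<rho> h" using cover[OF h] by auto
    then show False using uncovered cover[OF h] h by (simp add: insert_DiffM)
  qed
  have "count e h = 1" if h: "h \<in># e" for h
  proof (rule ccontr)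
    assume "count e h \<noteq> 1"
    moreover have "0 < count e h" using h by (simp only: count_greater_zero_iff)
    ultimately have "1 < count e h" by linarith
    then have "h \<in># e - {#h#}" by (simp add: in_diff_count)
    then show False using cover[OF h] missed[OF h] by blast
  qed
  then have "size e = (\<Sum>h\<in>set_mset e. 1)"
    by (simp add: size_multiset_overloaded_eq)
  then show "card (set_mset e) = k" using e by (simp add: hec_edges_def)
  show "inj_on \<rho> (set_mset e)"
  proof (rule inj_onI, rule ccontr)
    fix h1 h2 assume h: "h1 \<in># e" "h2 \<in># e" "\<rho> h1 = \<rho> h2" "h1 \<noteq> h2"
    then have "h1 \<in># e - {#h2#}" by (simp add: in_diff_count)
    then show False using cover[OF h(2)] missed[OF h(1)] h(3) by auto
  qed
qed

lemma hec_edge_exchange: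
  assumes e: "e \<in> E" and g0: "g0 \<in> G"
  shows "\<exists>h\<in>#e. add_mset g0 (e - {#h#}) \<in> E"
proof (rule ccontr)
  assume no_exchange: "\<not> ?thesis"
  have g0_notin: "g0 \<notin># e" using no_exchange e by (metis insert_DiffM)
  have "\<exists>r\<in>R. \<forall>g\<in>#add_mset g0 (e - {#h#}). g \<subseteq> r" if h: "h \<in># e" for h
  proof -
    have "size e = k" using e by (simp add: hec_edges_def)
    moreover have "size e \<noteq> 0" using h by auto
    ultimately have "size (add_mset g0 (e - {#h#})) = k" using h by (simp add: size_Diff_singleton)
    moreover have "set_mset (add_mset g0 (e - {#h#})) \<subseteq> G"
      using e g0 by (auto simp: hec_edges_def dest: in_diffD)
    ultimately show ?thesis using no_exchange h by (auto simp: hec_edges_def)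
  qed
  then obtain \<rho> where \<rho>: "\<And>h. h \<in># e \<Longrightarrow> \<rho> h \<in> R \<and> (\<forall>g\<in>#add_mset g0 (e - {#h#}). g \<subseteq> \<rho> h)"
    by metis
  define D where "D = set_mset e"
  have card_D: "card D = k" and inj: "inj_on \<rho> D"
    using hec_edge_cover_injective[OF e, of \<rho>] \<rho> unfolding D_def by auto
  obtain h0 where h0: "h0 \<in> H" "g0 = subregion h0" using g0 subregions_eq by auto
  from hec_k_bound show False
  proof
    assume bound: "\<forall>h\<in>H. card {r\<in>R. h \<in> r} < k"
    have "\<rho> ` D \<subseteq> {r\<in>R. h0 \<in> r}" using \<rho> h0 in_own_subregion unfolding D_def by fastforce
    then have "card (\<rho> ` D) \<le> card {r\<in>R. h0 \<in> r}" using finite_R by (simp add: card_mono)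
    then show False using bound h0 card_D card_image[OF inj] by auto
  next
    assume bound: "\<forall>r\<in>R. card {g\<in>G. g \<subseteq> r} < k"
    obtain h1 where h1: "h1 \<in> D" using card_D by (fastforce simp: hec_k_def)
    have "card D \<noteq> 0" using h1 unfolding D_def by auto
    have "D - {h1} \<subseteq> set_mset (e - {#h1#})" unfolding D_def by (simp add: subset_iff in_diff_count)
    then have "insert g0 (D - {h1}) \<subseteq> {g\<in>G. g \<subseteq> \<rho> h1}"
      using \<rho>[of h1] h1 g0 e unfolding D_def by (auto simp: hec_edges_def)
    then have "card (insert g0 (D - {h1})) \<le> card {g\<in>G. g \<subseteq> \<rho> h1}"
      using finite_subregions by (simp add: card_mono)
    moreover have "card (insert g0 (D - {h1})) = k"
      using g0_notin h1 card_D \<open>card D \<noteq> 0\<close> unfolding D_def by (simp add: card_Diff_singleton)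
    ultimately show False using bound \<rho>[of h1] h1 unfolding D_def by fastforce
  qed
qed

definition edge_mass :: "'a set \<Rightarrow> real" where
  "edge_mass U = (\<Sum>e\<in>E. \<Prod>g\<in>#e. prob_of P (g \<inter> U))"

text \<open>Each edge through \<open>g0\<close> is counted once, whatever the multiplicity of \<open>g0\<close> in it, so
this is a lower bound for the partial derivative of \<open>edge_mass\<close> in the mass of \<open>g0\<close>.\<close>

definition edge_mass_through :: "'a set \<Rightarrow> 'a set \<Rightarrow> real" where
  "edge_mass_through g0 U = (\<Sum>e\<in>{e\<in>E. g0 \<in># e}. \<Prod>g\<in>#e - {#g0#}. prob_of P (g \<inter> U))"

lemma prob_of_subset_nonneg: "U \<subseteq> H \<Longrightarrow> 0 \<le> prob_of P U"
  using prior_nonneg by (auto intro: prob_of_nonneg)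

lemma prob_of_subset_mono: "U \<subseteq> V \<Longrightarrow> V \<subseteq> H \<Longrightarrow> prob_of P U \<le> prob_of P V"
  using prior_nonneg finite_H by (intro prob_of_mono) (auto intro: finite_subset)

lemma subregion_mass_nonneg: "g \<in> G \<Longrightarrow> 0 \<le> prob_of P (g \<inter> U)"
  using subregion_subset by (intro prob_of_subset_nonneg) auto

lemma subregion_mass_mono: "U \<subseteq> V \<Longrightarrow> g \<in> G \<Longrightarrow> prob_of P (g \<inter> U) \<le> prob_of P (g \<inter> V)"
  using subregion_subset by (intro prob_of_subset_mono) auto

lemma edge_mass_nonneg: "0 \<le> edge_mass U"
  unfolding edge_mass_def
  by (intro sum_nonneg prod_mset_nonneg subregion_mass_nonneg) (auto intro: hec_edge_subregion)

lemma edge_mass_mono: "U \<subseteq> V \<Longrightarrow> edge_mass U \<le> edge_mass V"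
  unfolding edge_mass_def
  by (intro sum_mono prod_mset_mono)
    (auto intro: subregion_mass_nonneg subregion_mass_mono hec_edge_subregion)

lemma edge_mass_insert:
  assumes "h0 \<notin> U"
  shows "edge_mass (insert h0 U) =
    (\<Sum>e\<in>E. \<Prod>g\<in>#e. prob_of P (g \<inter> U) + (if h0 \<in> g then P h0 else 0))"
proof -
  have "image_mset (\<lambda>g. prob_of P (g \<inter> insert h0 U)) e =
      image_mset (\<lambda>g. prob_of P (g \<inter> U) + (if h0 \<in> g then P h0 else 0)) e" if e: "e \<in> E" for e
  proof (rule image_mset_cong)
    fix g assume "g \<in># e"
    then have "g \<subseteq> H" using e by (simp add: hec_edge_subregion subregion_subset)
    then have "finite g" using finite_H by (rule finite_subset)
    then show "prob_of P (g \<inter> insert h0 U) = prob_of P (g \<inter> U) + (if h0 \<in> g then P h0 else 0)"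
      using assms by (rule prob_of_Int_insert)
  qed
  then show ?thesis unfolding edge_mass_def by (intro sum.cong) simp_all
qed

lemma edge_mass_supermodular:
  assumes "U \<subseteq> V" and "h0 \<notin> V"
  shows "edge_mass (insert h0 U) - edge_mass U \<le> edge_mass (insert h0 V) - edge_mass V"
proof -
  define d where "d g = (if h0 \<in> g then P h0 else 0)" for g
  define inc where
    "inc W e = (\<Prod>g\<in>#e. prob_of P (g \<inter> W) + d g) - (\<Prod>g\<in>#e. prob_of P (g \<inter> W))" for W e
  have increment: "edge_mass (insert h0 W) - edge_mass W = (\<Sum>e\<in>E. inc W e)" if "h0 \<notin> W" for W
    unfolding inc_def d_def edge_mass_insert[OF that] by (simp add: edge_mass_def sum_subtractf)
  have "inc U e \<le> inc V e" if e: "e \<in> E" for e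
    unfolding inc_def
  proof (rule prod_mset_increment_mono)
    fix g assume "g \<in># e"
    then have "g \<in> G" using e hec_edge_subregion by blast
    then show "0 \<le> prob_of P (g \<inter> U) \<and> prob_of P (g \<inter> U) \<le> prob_of P (g \<inter> V) \<and> 0 \<le> d g"
      using assms subregion_subset prior_nonneg
      by (auto simp: d_def subregion_mass_nonneg subregion_mass_mono)
  qed
  moreover have "h0 \<notin> U" using assms by auto
  ultimately show ?thesis using assms by (simp add: increment sum_mono)
qed

lemma edge_mass_increment_ge:
  assumes "h0 \<in> H" and "h0 \<notin> U"
  shows "P h0 * edge_mass_through (subregion h0) U \<le> edge_mass (insert h0 U) - edge_mass U"
proof -
  define d where "d g = (if h0 \<in> g then P h0 else 0)" for g
  define inc where
    "inc e = (\<Prod>g\<in>#e. prob_of P (g \<inter> U) + d g) - (\<Prod>g\<in>#e. prob_of P (g \<inter> U))" for e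
  have factors_nonneg: "0 \<le> prob_of P (g \<inter> U) \<and> 0 \<le> d g" if "e \<in> E" "g \<in># e" for e g
    using that hec_edge_subregion subregion_subset prior_nonneg assms(1)
    by (auto simp: d_def subregion_mass_nonneg)
  have inc_nonneg: "0 \<le> inc e" if "e \<in> E" for e
    unfolding inc_def using factors_nonneg[OF that] by (simp add: prod_mset_mono)
  have "P h0 * edge_mass_through (subregion h0) U
      = (\<Sum>e\<in>{e\<in>E. subregion h0 \<in># e}.
          d (subregion h0) * (\<Prod>g\<in>#e - {#subregion h0#}. prob_of P (g \<inter> U)))"
    unfolding edge_mass_through_def d_def using assms(1) in_own_subregion
    by (simp add: sum_distrib_left)
  also have "\<dots> \<le> (\<Sum>e\<in>{e\<in>E. subregion h0 \<in># e}. inc e)"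
  proof (rule sum_mono)
    fix e assume "e \<in> {e\<in>E. subregion h0 \<in># e}"
    then show "d (subregion h0) * (\<Prod>g\<in>#e - {#subregion h0#}. prob_of P (g \<inter> U)) \<le> inc e"
      unfolding inc_def using factors_nonneg by (intro prod_mset_increment_ge) auto
  qed
  also have "\<dots> \<le> (\<Sum>e\<in>E. inc e)"
    using inc_nonneg finite_hec_edges by (intro sum_mono2) auto
  also have "\<dots> = edge_mass (insert h0 U) - edge_mass U"
    unfolding inc_def d_def edge_mass_insert[OF assms(2)] by (simp add: edge_mass_def sum_subtractf)
  finally show ?thesis .
qed

lemma sum_subregion_mass: "U \<subseteq> H \<Longrightarrow> (\<Sum>g\<in>G. prob_of P (g \<inter> U)) = prob_of P U"
proof -
  assume U: "U \<subseteq> H"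
  have "(\<Union>g\<in>G. g \<inter> U) = U" using U in_own_subregion subregions_eq by auto
  moreover have "sum P (\<Union>g\<in>G. g \<inter> U) = (\<Sum>g\<in>G. sum P (g \<inter> U))"
  proof (rule sum.UNION_disjoint)
    show "finite G" by (rule finite_subregions)
    show "\<forall>g\<in>G. finite (g \<inter> U)"
      using subregion_subset finite_H by (meson finite_Int finite_subset)
    show "\<forall>g1\<in>G. \<forall>g2\<in>G. g1 \<noteq> g2 \<longrightarrow> g1 \<inter> U \<inter> (g2 \<inter> U) = {}"
      using subregions_disjoint by blast
  qed
  ultimately show ?thesis unfolding prob_of_def by simp
qed

text \<open>By \<open>hec_edge_exchange\<close>, an edge \<open>e\<close> is determined by the edge through \<open>g0\<close> obtained
by exchanging one member \<open>g\<close> of \<open>e\<close> for \<open>g0\<close>, together with \<open>g\<close>.\<close>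

lemma edge_mass_le_through:
  assumes U: "U \<subseteq> H" and g0: "g0 \<in> G"
  shows "edge_mass U \<le> prob_of P U * edge_mass_through g0 U"
proof -
  define E0 where "E0 = {e\<in>E. g0 \<in># e}"
  define F where "F x = prob_of P (snd x \<inter> U) * (\<Prod>g\<in>#fst x - {#g0#}. prob_of P (g \<inter> U))" for x
  define out where "out e = (SOME h. h \<in># e \<and> add_mset g0 (e - {#h#}) \<in> E)" for e
  define swap where "swap e = (add_mset g0 (e - {#out e#}), out e)" for e
  have out: "out e \<in># e \<and> add_mset g0 (e - {#out e#}) \<in> E" if "e \<in> E" for e
    using hec_edge_exchange[OF that g0] unfolding out_def by (metis (mono_tags, lifting) someI_ex)
  have unswap: "add_mset (snd (swap e)) (fst (swap e) - {#g0#}) = e" if "e \<in> E" for e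
    using out[OF that] unfolding swap_def by (simp add: insert_DiffM)
  have inj: "inj_on swap E" by (rule inj_on_inverseI) (rule unswap)
  have "edge_mass U = (\<Sum>e\<in>E. F (swap e))"
    unfolding edge_mass_def F_def
    by (intro sum.cong refl) (metis unswap prod_mset.add_mset image_mset_add_mset)
  also have "\<dots> = (\<Sum>x\<in>swap ` E. F x)" by (simp add: sum.reindex[OF inj])
  also have "\<dots> \<le> (\<Sum>x\<in>E0 \<times> G. F x)"
  proof (rule sum_mono2)
    show "finite (E0 \<times> G)" using finite_hec_edges finite_subregions unfolding E0_def by simp
    show "swap ` E \<subseteq> E0 \<times> G" using out hec_edge_subregion unfolding swap_def E0_def by auto
    show "0 \<le> F x" if "x \<in> E0 \<times> G - swap ` E" for x
      using that unfolding F_def E0_def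
      by (auto intro!: mult_nonneg_nonneg subregion_mass_nonneg prod_mset_nonneg)
        (meson hec_edge_subregion in_diffD)
  qed
  also have "\<dots> = (\<Sum>e\<in>E0. \<Sum>g\<in>G. prob_of P (g \<inter> U) * (\<Prod>g'\<in>#e - {#g0#}. prob_of P (g' \<inter> U)))"
    unfolding F_def by (simp add: sum.cartesian_product split_beta)
  also have "\<dots> = (\<Sum>g\<in>G. prob_of P (g \<inter> U)) * edge_mass_through g0 U"
    unfolding E0_def edge_mass_through_def by (subst sum.swap) (simp add: sum_product)
  finally show ?thesis using sum_subregion_mass[OF U] by simp
qed

lemma prior_mult_edge_mass_le_increment:
  assumes WV: "W \<subseteq> V" and h0: "h0 \<notin> V" and VH: "insert h0 V \<subseteq> H"
  shows "P h0 * edge_mass (insert h0 W) \<le>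
    prob_of P (insert h0 V) * (edge_mass (insert h0 V) - edge_mass V)"
proof -
  define inc where "inc = edge_mass (insert h0 W) - edge_mass W"
  have W: "W \<subseteq> H" "h0 \<notin> W" and h0H: "h0 \<in> H" using assms by auto
  have P0: "0 \<le> P h0" using h0H prior_nonneg by simp
  have pW: "0 \<le> prob_of P W" using W by (simp add: prob_of_subset_nonneg)
  have "P h0 * edge_mass W \<le> P h0 * (prob_of P W * edge_mass_through (subregion h0) W)"
    using P0 edge_mass_le_through[OF W(1)] h0H subregions_eq by (simp add: mult_left_mono)
  also have "\<dots> = prob_of P W * (P h0 * edge_mass_through (subregion h0) W)" by simp
  also have "\<dots> \<le> prob_of P W * inc"
    unfolding inc_def using edge_mass_increment_ge[OF h0H W(2)] pW by (rule mult_left_mono)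
  finally have "P h0 * edge_mass (insert h0 W) \<le> (P h0 + prob_of P W) * inc"
    unfolding inc_def by (simp add: algebra_simps)
  also have "\<dots> = prob_of P (insert h0 W) * inc"
    using W finite_H by (simp add: prob_of_insert finite_subset)
  also have "\<dots> \<le> prob_of P (insert h0 V) * inc"
    using WV VH edge_mass_mono[of W "insert h0 W"] unfolding inc_def
    by (intro mult_right_mono prob_of_subset_mono) auto
  also have "\<dots> \<le> prob_of P (insert h0 V) * (edge_mass (insert h0 V) - edge_mass V)"
    unfolding inc_def using edge_mass_supermodular[OF WV h0] VH
    by (intro mult_left_mono prob_of_subset_nonneg) auto
  finally show ?thesis .
qed

text \<open>For the test \<open>t\<close>, the label of a hypothesis \<open>h\<close> is its outcome \<open>h t\<close>.\<close>

definition expected_residual :: "('a \<Rightarrow> 'l) \<Rightarrow> 'a set \<Rightarrow> real" where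
  "expected_residual lab V = (\<Sum>h\<in>V. P h * edge_mass (V \<inter> {x. lab x = lab h}))"

definition expected_gain :: "('a \<Rightarrow> 'l) \<Rightarrow> 'a set \<Rightarrow> real" where
  "expected_gain lab V = edge_mass V - expected_residual lab V / prob_of P V"

lemma expected_residual_insert:
  fixes lab :: "'a \<Rightarrow> 'l"
  assumes V: "finite V" "h0 \<notin> V"
  defines "C \<equiv> {x. lab x = lab h0}"
  shows "expected_residual lab (insert h0 V) = expected_residual lab V
    + P h0 * edge_mass (insert h0 (V \<inter> C))
    + prob_of P (V \<inter> C) * (edge_mass (insert h0 (V \<inter> C)) - edge_mass (V \<inter> C))"
proof -
  define B where "B = edge_mass (insert h0 (V \<inter> C)) - edge_mass (V \<inter> C)"
  have split: "P h * edge_mass (insert h0 V \<inter> {x. lab x = lab h})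
      = P h * edge_mass (V \<inter> {x. lab x = lab h}) + (if h \<in> C then P h * B else 0)" for h
  proof (cases "h \<in> C")
    case True
    then have "{x. lab x = lab h} = C" unfolding C_def by simp
    then show ?thesis using True unfolding B_def C_def by (simp add: algebra_simps)
  next
    case False
    then have "insert h0 V \<inter> {x. lab x = lab h} = V \<inter> {x. lab x = lab h}" unfolding C_def by auto
    then show ?thesis using False by simp
  qed
  have "expected_residual lab (insert h0 V) = P h0 * edge_mass (insert h0 (V \<inter> C))
      + (\<Sum>h\<in>V. P h * edge_mass (insert h0 V \<inter> {x. lab x = lab h}))"
    unfolding expected_residual_def C_def using V by (simp add: Int_insert_left)
  also have "(\<Sum>h\<in>V. P h * edge_mass (insert h0 V \<inter> {x. lab x = lab h}))
      = expected_residual lab V + (\<Sum>h\<in>V \<inter> C. P h * B)"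
    unfolding split expected_residual_def sum.distrib using V(1)
    by (simp add: sum.inter_filter Int_def)
  also have "(\<Sum>h\<in>V \<inter> C. P h * B) = prob_of P (V \<inter> C) * B"
    unfolding prob_of_def by (simp add: sum_distrib_right)
  finally show ?thesis unfolding B_def by simp
qed

lemma label_class_mass_le_expected_residual:
  fixes lab :: "'a \<Rightarrow> 'l" and l :: 'l
  assumes "V \<subseteq> H"
  defines "C \<equiv> {x. lab x = l}"
  shows "prob_of P (V \<inter> C) * edge_mass (V \<inter> C) \<le> expected_residual lab V"
proof -
  have "prob_of P (V \<inter> C) * edge_mass (V \<inter> C)
      = (\<Sum>h\<in>V \<inter> C. P h * edge_mass (V \<inter> {x. lab x = lab h}))"
    unfolding prob_of_def C_def by (simp add: sum_distrib_right)
  also have "\<dots> \<le> expected_residual lab V"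
    unfolding expected_residual_def using assms finite_H prior_nonneg edge_mass_nonneg
    by (intro sum_mono2) (auto intro: finite_subset)
  finally show ?thesis .
qed

lemma expected_gain_insert_mono:
  assumes h0: "h0 \<notin> V" and VH: "insert h0 V \<subseteq> H" and pos: "0 < prob_of P V"
  shows "expected_gain lab V \<le> expected_gain lab (insert h0 V)"
proof -
  define C where "C = {x. lab x = lab h0}"
  define M where "M = edge_mass (insert h0 (V \<inter> C))"
  define A where "A = edge_mass (insert h0 V) - edge_mass V"
  have V: "finite V" "V \<subseteq> H" using VH finite_H finite_subset by auto
  have p: "prob_of P (insert h0 V) = P h0 + prob_of P V" using V h0 by (simp add: prob_of_insert)
  have "expected_residual lab (insert h0 V) / (P h0 + prob_of P V)
      - expected_residual lab V / prob_of P V \<le> A"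
  proof (rule expected_gain_step_inequality[where B = "M - edge_mass (V \<inter> C)"])
    show "expected_residual lab (insert h0 V) = expected_residual lab V + P h0 * M
        + prob_of P (V \<inter> C) * (M - edge_mass (V \<inter> C))"
      using expected_residual_insert[OF V(1) h0, of lab] unfolding M_def C_def by simp
    show "M - edge_mass (V \<inter> C) \<le> A"
      using edge_mass_supermodular[of "V \<inter> C" V h0] h0 unfolding M_def A_def by auto
    show "(P h0 + prob_of P (V \<inter> C)) * M \<le> expected_residual lab (insert h0 V)"
      using label_class_mass_le_expected_residual[OF VH, of lab "lab h0"] h0 V(1)
      unfolding M_def C_def by (simp add: Int_insert_left prob_of_insert)
    show "P h0 * M \<le> (P h0 + prob_of P V) * A"
      using prior_mult_edge_mass_le_increment[of "V \<inter> C" V h0] h0 VH p unfolding M_def A_def by auto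
    show "0 \<le> P h0" using VH prior_nonneg by simp
    show "0 \<le> prob_of P (V \<inter> C)" "prob_of P (V \<inter> C) \<le> prob_of P V"
      using V(2) by (auto intro: prob_of_subset_nonneg prob_of_subset_mono)
  qed (rule pos)
  then show ?thesis unfolding expected_gain_def A_def p by simp
qed

lemma expected_gain_mono:
  assumes "V' \<subseteq> V" and "V \<subseteq> H" and "0 < prob_of P V'"
  shows "expected_gain lab V' \<le> expected_gain lab V"
proof -
  have "expected_gain lab V' \<le> expected_gain lab (V' \<union> D)" if "finite D" "D \<subseteq> V - V'" for D
    using that
  proof (induction D rule: finite_induct)
    case (insert h0 D)
    have "V' \<union> D \<subseteq> H" using assms insert.prems by auto
    then have "0 < prob_of P (V' \<union> D)" using assms(3) prob_of_subset_mono[of V' "V' \<union> D"] by auto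
    then have "expected_gain lab (V' \<union> D) \<le> expected_gain lab (insert h0 (V' \<union> D))"
      using assms insert by (intro expected_gain_insert_mono) auto
    then show ?case using insert by simp
  qed simp
  moreover have "finite (V - V')" using assms(2) finite_H finite_subset by auto
  moreover have "V' \<union> (V - V') = V" using assms(1) by auto
  ultimately show ?thesis by (metis order_refl)
qed

end

lemma version_space_insert:
  "version_space H (insert (t, h t) S) = version_space H S \<inter> {x. x t = h t}"
  unfolding version_space_def by auto

lemma version_space_antimono: "S \<subseteq> S' \<Longrightarrow> version_space H S' \<subseteq> version_space H S"
  unfolding version_space_def by auto

lemma version_space_subset: "version_space H S \<subseteq> H"
  unfolding version_space_def by auto

lemma f_hec_eq_edge_mass:
  assumes "hec H R P"
  shows "f_hec H R P S =
    (\<Sum>e\<in>hec_edges H R. \<Prod>g\<in>#e. prob_of P g) - hec.edge_mass H R P (version_space H S)"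
  unfolding f_hec_def hec.edge_mass_def[OF assms] ..

lemma hec_gain_eq_expected_gain:
  assumes "hec H R P" and "0 < prob_of P (version_space H S)"
  shows "hec_gain H R P t S = hec.expected_gain H R P (\<lambda>h. h t) (version_space H S)"
proof -
  define V where "V = version_space H S"
  define F where "F = hec.edge_mass H R P"
  have "hec_gain H R P t S = (\<Sum>h\<in>V. P h / prob_of P V * (F V - F (V \<inter> {x. x t = h t})))"
    unfolding hec_gain_def f_hec_eq_edge_mass[OF assms(1)] version_space_insert V_def F_def by simp
  also have "\<dots> = (\<Sum>h\<in>V. P h) / prob_of P V * F V
      - (\<Sum>h\<in>V. P h * F (V \<inter> {x. x t = h t})) / prob_of P V"
    by (simp add: right_diff_distrib sum_subtractf sum_divide_distrib sum_distrib_right)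
  also have "\<dots> = hec.expected_gain H R P (\<lambda>h. h t) V"
    using assms(2) unfolding V_def F_def
      hec.expected_gain_def[OF assms(1)] hec.expected_residual_def[OF assms(1)]
    by (simp add: prob_of_def)
  finally show ?thesis unfolding V_def .
qed

theorem theorem2:
  fixes H :: "('t \<Rightarrow> 'o) set" and T :: "'t set" and Out :: "'o set"
    and R :: "('t \<Rightarrow> 'o) set set" and P :: "('t \<Rightarrow> 'o) \<Rightarrow> real"
  assumes "finite H" and "finite T" and "finite Out"
    and "\<forall>h\<in>H. \<forall>t\<in>T. h t \<in> Out"
    and "\<forall>h\<in>H. P h \<ge> 0" and "(\<Sum>h\<in>H. P h) = 1"
    and "finite R" and "\<forall>r\<in>R. r \<subseteq> H" and "\<Union>R = H"
  shows "(\<forall>S t h. S \<subseteq> T \<times> Out \<longrightarrow> t \<in> T \<longrightarrow> h \<in> H \<longrightarrow>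
            f_hec H R P (insert (t, h t) S) - f_hec H R P S \<ge> 0)
       \<and> (\<forall>S S' t. S \<subseteq> S' \<longrightarrow> S' \<subseteq> T \<times> Out \<longrightarrow> prob_of P (version_space H S') > 0
            \<longrightarrow> t \<in> T \<longrightarrow> hec_gain H R P t S \<ge> hec_gain H R P t S')"
proof -
  interpret hec H R P using assms by unfold_locales auto
  show ?thesis
  proof (intro conjI allI impI)
    fix S t h
    show "f_hec H R P (insert (t, h t) S) - f_hec H R P S \<ge> 0"
      unfolding f_hec_eq_edge_mass[OF hec_axioms]
      by (simp add: edge_mass_mono version_space_antimono subset_insertI)
  next
    fix S S' :: "('t \<times> 'o) set" and t
    assume "S \<subseteq> S'" and pos: "0 < prob_of P (version_space H S')"
    have shrink: "version_space H S' \<subseteq> version_space H S"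
      using \<open>S \<subseteq> S'\<close> by (rule version_space_antimono)
    then have "0 < prob_of P (version_space H S)"
      using pos prob_of_subset_mono[OF _ version_space_subset] by (meson less_le_trans)
    with pos shrink show "hec_gain H R P t S' \<le> hec_gain H R P t S"
      by (simp add: hec_gain_eq_expected_gain[OF hec_axioms] expected_gain_mono
          version_space_subset)
  qed
qed

end
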